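(* Let $(X,\rho,\mu)$ be a $K$-doubling metric measure space, let $U\subseteq X$ be nonempty and let $x$ be a $\mu$-interior point of $U$. Then there exists a map $r_x\colon X\to U$ such that $r_x(y)=y$ for all $y\in U$ and $\rho\big(y,r_x(y)\big)=o\big(\rho(y,x)\big)$ as $y\to x$.
   Context: A $K$-doubling metric measure space ($K>0$) is a triple $(X,\rho,\mu)$ where $(X,\rho)$ is a complete separable metric space and $\mu$ is a Borel-regular outer measure on $X$ with $0<\mu(B_{2r}(x))\le K\mu(B_r(x))<+\infty$ for all $x\in X$, $r>0$. A point $x\in U$ is a $\mu$-interior point of $U$ if there is a Borel set $B\subseteq U$ with $\lim_{r\to0^+}\mu(B_r(x)\setminus B)/\mu(B_r(x))=0$. *)

theory Defs
  imports "HOL-Analysis.Analysis" "HOL-Library.Landau_Symbols"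
begin

text \<open>The underlying space is the whole type
  'a, a complete separable metric space (class polish_space: complete metric space
  with a countable basis, equivalently separable). The Borel-regular outer measure is
  represented by its restriction to the Borel sets, a measure M on the Borel
  sigma-algebra.\<close>
definition doubling_mms :: "real \<Rightarrow> ('a::polish_space) measure \<Rightarrow> bool" where
  "doubling_mms K M \<longleftrightarrow> K > 0 \<and> sets M = sets borel \<and>
     (\<forall>x r. r > 0 \<longrightarrow>
        0 < emeasure M (ball x (2*r)) \<and>
        emeasure M (ball x (2*r)) \<le> ennreal K * emeasure M (ball x r) \<and>
        ennreal K * emeasure M (ball x r) < \<infinity>)"

definition mu_interior_point :: "('a::metric_space) measure \<Rightarrow> 'a set \<Rightarrow> 'a \<Rightarrow> bool" where
  "mu_interior_point M U x \<longleftrightarrow> x \<in> U \<and>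
     (\<exists>B. B \<in> sets borel \<and> B \<subseteq> U \<and>
        ((\<lambda>r. emeasure M (ball x r - B) / emeasure M (ball x r)) \<longlongrightarrow> 0) (at_right 0))"

end

theory Submission
  imports Defs
begin

text \<open>Let \<open>B \<subseteq> U\<close> have density 1 at \<open>x\<close>. If a ball \<open>ball y (\<epsilon> * dist y x)\<close> near \<open>x\<close>
  missed \<open>B\<close>, then \<open>k\<close> doublings of it, with \<open>k\<close> depending only on \<open>\<epsilon>\<close>, would cover
  \<open>ball x ((1 + \<epsilon>) * dist y x)\<close>, so \<open>B\<close> would miss a fixed proportion \<open>K\<^sup>-\<^sup>k\<close> of
  arbitrarily small balls around \<open>x\<close>. Hence \<open>infdist y U = o(dist y x)\<close>, and mapping each
  \<open>y \<notin> U\<close> to a point of \<open>U\<close> that is nearest up to an error \<open>dist y x ^ 2\<close> gives the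
  retraction.\<close>

lemma doubling_mms_pos: "doubling_mms K M \<Longrightarrow> K > 0"
  unfolding doubling_mms_def by simp

lemma doubling_mms_sets: "doubling_mms K M \<Longrightarrow> sets M = sets borel"
  unfolding doubling_mms_def by simp

lemma doubling_mms_ball_fmeasurable:
  assumes "doubling_mms K M"
  shows "ball y r \<in> fmeasurable M"
proof (cases "r > 0")
  case True
  with assms have "ennreal K * emeasure M (ball y r) < \<infinity>" "K > 0"
    unfolding doubling_mms_def by auto
  then have "emeasure M (ball y r) < \<infinity>"
    by (auto simp: ennreal_mult_less_top)
  then show ?thesis
    using doubling_mms_sets[OF assms] by (intro fmeasurableI) auto
next
  case False
  then have "ball y r = {}" by simp
  then show ?thesis by (simp only:) (simp add: fmeasurable_def)
qed

lemma doubling_mms_measure_ball_pos: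
  assumes "doubling_mms K M" "r > 0"
  shows "measure M (ball y r) > 0"
proof -
  have "0 < emeasure M (ball y (2 * (r / 2)))"
    using assms unfolding doubling_mms_def by (meson half_gt_zero)
  then show ?thesis
    by (simp add: emeasure_eq_measure2[OF doubling_mms_ball_fmeasurable[OF assms(1)]])
qed

lemma doubling_mms_measure_ball_double:
  assumes "doubling_mms K M" "r > 0"
  shows "measure M (ball y (2 * r)) \<le> K * measure M (ball y r)"
proof -
  have "emeasure M (ball y (2 * r)) \<le> ennreal K * emeasure M (ball y r)"
    using assms unfolding doubling_mms_def by auto
  then show ?thesis
    using doubling_mms_pos[OF assms(1)]
    by (simp add: emeasure_eq_measure2[OF doubling_mms_ball_fmeasurable[OF assms(1)]]
        ennreal_mult[symmetric] ennreal_le_iff)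
qed

lemma doubling_mms_measure_ball_pow2:
  assumes "doubling_mms K M" "r > 0"
  shows "measure M (ball y (2 ^ k * r)) \<le> K ^ k * measure M (ball y r)"
proof (induction k)
  case 0
  then show ?case by simp
next
  case (Suc k)
  have "measure M (ball y (2 ^ Suc k * r)) \<le> K * measure M (ball y (2 ^ k * r))"
    using doubling_mms_measure_ball_double[OF assms(1), of "2 ^ k * r"] assms(2)
    by (simp add: mult.assoc)
  also have "\<dots> \<le> K * (K ^ k * measure M (ball y r))"
    using Suc doubling_mms_pos[OF assms(1)] by (simp add: mult_left_mono)
  finally show ?case by simp
qed

lemma doubling_mms_density_ratio_eventually_less:
  assumes dm: "doubling_mms K M" and "B \<in> sets borel"
    and density: "((\<lambda>r. emeasure M (ball x r - B) / emeasure M (ball x r)) \<longlongrightarrow> 0) (at_right 0)"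
    and "e > 0"
  shows "\<forall>\<^sub>F s in at_right 0. measure M (ball x s - B) < e * measure M (ball x s)"
proof -
  have "\<forall>\<^sub>F s in at_right 0. emeasure M (ball x s - B) / emeasure M (ball x s) < ennreal e"
    using order_tendstoD(2)[OF density] \<open>e > 0\<close> by simp
  moreover have "\<forall>\<^sub>F s in at_right (0::real). 0 < s"
    by (rule eventually_at_right_less)
  ultimately show ?thesis
  proof eventually_elim
    case (elim s)
    have ball: "ball x s \<in> fmeasurable M"
      using dm by (rule doubling_mms_ball_fmeasurable)
    then have "ball x s - B \<in> fmeasurable M"
      using \<open>B \<in> sets borel\<close> doubling_mms_sets[OF dm] by (intro fmeasurable_Diff) auto
    moreover have pos: "measure M (ball x s) > 0"
      using dm elim(2) by (rule doubling_mms_measure_ball_pos)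
    ultimately have "ennreal (measure M (ball x s - B) / measure M (ball x s)) < ennreal e"
      using elim(1) ball by (simp add: emeasure_eq_measure2 divide_ennreal)
    then show ?case
      using pos by (simp add: ennreal_less_iff divide_less_eq)
  qed
qed

lemma doubling_mms_hole_measure_bound:
  assumes dm: "doubling_mms K M" and B: "B \<in> sets borel"
    and "\<epsilon> > 0" and "y \<noteq> x" and k: "2 + \<epsilon> < 2 ^ k * \<epsilon>"
    and hole: "\<forall>b\<in>B. \<epsilon> * dist y x \<le> dist y b"
  defines "R \<equiv> (1 + \<epsilon>) * dist y x"
  shows "measure M (ball x R) \<le> K ^ k * measure M (ball x R - B)"
proof -
  define D where "D = dist y x"
  have "D > 0" using \<open>y \<noteq> x\<close> by (simp add: D_def)
  have inner: "ball y (\<epsilon> * D) \<subseteq> ball x R - B"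
  proof (intro subsetI DiffI)
    fix z assume z: "z \<in> ball y (\<epsilon> * D)"
    then show "z \<in> ball x R"
      using dist_triangle[of x z y] by (simp add: D_def R_def dist_commute algebra_simps)
    show "z \<notin> B"
      using z hole by (auto simp: D_def)
  qed
  have outer: "ball x R \<subseteq> ball y (2 ^ k * (\<epsilon> * D))"
  proof
    fix z assume "z \<in> ball x R"
    then have "dist y z < (2 + \<epsilon>) * D"
      using dist_triangle[of y z x] by (simp add: D_def R_def dist_commute algebra_simps)
    also have "\<dots> < 2 ^ k * (\<epsilon> * D)"
      using k \<open>D > 0\<close> by (simp add: mult.assoc[symmetric])
    finally show "z \<in> ball y (2 ^ k * (\<epsilon> * D))" by simp
  qed
  have sets: "ball z r \<in> sets M" "ball z r - B \<in> fmeasurable M" for z r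
    using B doubling_mms_sets[OF dm] doubling_mms_ball_fmeasurable[OF dm]
    by (auto intro: fmeasurable_Diff)
  have "measure M (ball x R) \<le> measure M (ball y (2 ^ k * (\<epsilon> * D)))"
    using outer sets by (intro measure_mono_fmeasurable doubling_mms_ball_fmeasurable[OF dm])
  also have "\<dots> \<le> K ^ k * measure M (ball y (\<epsilon> * D))"
    using \<open>\<epsilon> > 0\<close> \<open>D > 0\<close> by (intro doubling_mms_measure_ball_pow2[OF dm]) simp
  also have "\<dots> \<le> K ^ k * measure M (ball x R - B)"
    using inner sets doubling_mms_pos[OF dm] by (intro mult_left_mono measure_mono_fmeasurable) auto
  finally show ?thesis .
qed

lemma doubling_mms_density_point_near:
  assumes dm: "doubling_mms K M" and B: "B \<in> sets borel"
    and density: "((\<lambda>r. emeasure M (ball x r - B) / emeasure M (ball x r)) \<longlongrightarrow> 0) (at_right 0)"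
    and "\<epsilon> > 0"
  shows "\<forall>\<^sub>F y in at x. \<exists>b\<in>B. dist y b < \<epsilon> * dist y x"
proof -
  have "K > 0" using dm by (rule doubling_mms_pos)
  obtain k :: nat where "(2 + \<epsilon>) / \<epsilon> < 2 ^ k"
    using real_arch_pow[of 2 "(2 + \<epsilon>) / \<epsilon>"] by auto
  then have k: "2 + \<epsilon> < 2 ^ k * \<epsilon>"
    using \<open>\<epsilon> > 0\<close> by (simp add: divide_less_eq)
  have "\<forall>\<^sub>F s in at_right 0. measure M (ball x s - B) < 1 / K ^ k * measure M (ball x s)"
    using \<open>K > 0\<close> by (intro doubling_mms_density_ratio_eventually_less[OF dm B density]) simp
  then obtain \<delta> where "\<delta> > 0" and small:
    "\<And>s. 0 < s \<Longrightarrow> s < \<delta> \<Longrightarrow> K ^ k * measure M (ball x s - B) < measure M (ball x s)"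
    using \<open>K > 0\<close> unfolding eventually_at_right_field by (auto simp: field_simps)
  have "\<exists>b\<in>B. dist y b < \<epsilon> * dist y x" if "y \<noteq> x" "(1 + \<epsilon>) * dist y x < \<delta>" for y
  proof (rule ccontr)
    assume "\<not> (\<exists>b\<in>B. dist y b < \<epsilon> * dist y x)"
    then have "measure M (ball x ((1 + \<epsilon>) * dist y x))
        \<le> K ^ k * measure M (ball x ((1 + \<epsilon>) * dist y x) - B)"
      using dm B \<open>\<epsilon> > 0\<close> \<open>y \<noteq> x\<close> k
      by (intro doubling_mms_hole_measure_bound) (auto simp: not_less)
    moreover have "K ^ k * measure M (ball x ((1 + \<epsilon>) * dist y x) - B)
        < measure M (ball x ((1 + \<epsilon>) * dist y x))"
      using \<open>\<epsilon> > 0\<close> that by (intro small) auto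
    ultimately show False by simp
  qed
  then show ?thesis
    unfolding eventually_at using \<open>\<delta> > 0\<close> \<open>\<epsilon> > 0\<close>
    by (intro exI[of _ "\<delta> / (1 + \<epsilon>)"]) (simp add: field_simps)
qed

lemma smallo_dist_square_dist:
  fixes x :: "'a::metric_space"
  shows "(\<lambda>y. dist y x ^ 2) \<in> o[at x](\<lambda>y. dist y x)"
proof (rule landau_o.smallI)
  fix c :: real
  assume "c > 0"
  have "((\<lambda>y. dist y x) \<longlongrightarrow> 0) (at x)"
    using tendsto_dist_iff[THEN iffD1, OF tendsto_ident_at[of x UNIV]] by simp
  then have "\<forall>\<^sub>F y in at x. dist y x < c"
    using \<open>c > 0\<close> by (rule order_tendstoD)
  then show "\<forall>\<^sub>F y in at x. norm (dist y x ^ 2) \<le> c * norm (dist y x)"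
    by eventually_elim (simp add: power2_eq_square mult_right_mono)
qed

lemma exists_retraction_smallo:
  fixes U :: "'a::metric_space set"
  assumes "U \<noteq> {}" and infdist_smallo: "(\<lambda>y. infdist y U) \<in> o[at x](\<lambda>y. dist y x)"
  shows "\<exists>r. (\<forall>y. r y \<in> U) \<and> (\<forall>y\<in>U. r y = y) \<and> (\<lambda>y. dist y (r y)) \<in> o[at x](\<lambda>y. dist y x)"
proof -
  have "\<exists>u. u \<in> U \<and> (y \<in> U \<longrightarrow> u = y) \<and> (y \<noteq> x \<longrightarrow> dist y u \<le> infdist y U + dist y x ^ 2)" for y
  proof -
    consider "y \<in> U" | "y \<notin> U" "y = x" | "y \<notin> U" "y \<noteq> x" by blast
    then show ?thesis
    proof cases
      case 1
      then show ?thesis by (intro exI[of _ y]) (simp add: infdist_nonneg)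
    next
      case 2
      with \<open>U \<noteq> {}\<close> show ?thesis by blast
    next
      case 3
      then have "Inf (dist y ` U) < infdist y U + dist y x ^ 2"
        using infdist_notempty[OF \<open>U \<noteq> {}\<close>] by simp
      then obtain u where "u \<in> U" "dist y u < infdist y U + dist y x ^ 2"
        using cInf_lessD[of "dist y ` U"] \<open>U \<noteq> {}\<close> by blast
      with 3 show ?thesis by (auto intro: less_imp_le)
    qed
  qed
  then obtain r where "\<forall>y. r y \<in> U \<and> (y \<in> U \<longrightarrow> r y = y) \<and>
      (y \<noteq> x \<longrightarrow> dist y (r y) \<le> infdist y U + dist y x ^ 2)"
    by metis
  then have r: "\<forall>y. r y \<in> U" "\<forall>y\<in>U. r y = y"
    and near: "\<And>y. y \<noteq> x \<Longrightarrow> dist y (r y) \<le> infdist y U + dist y x ^ 2"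
    by auto
  have "(\<lambda>y. dist y (r y)) \<in> O[at x](\<lambda>y. infdist y U + dist y x ^ 2)"
    by (intro bigoI[where c = 1]) (simp add: eventually_at_filter infdist_nonneg near)
  moreover have "(\<lambda>y. infdist y U + dist y x ^ 2) \<in> o[at x](\<lambda>y. dist y x)"
    using infdist_smallo smallo_dist_square_dist by (rule sum_in_smallo)
  ultimately have "(\<lambda>y. dist y (r y)) \<in> o[at x](\<lambda>y. dist y x)"
    by (rule landau_o.big_small_trans)
  with r show ?thesis by blast
qed

theorem proposition2p3:
  fixes K :: real and M :: "('a::polish_space) measure" and U :: "'a set" and x :: 'a
  assumes "doubling_mms K M"
    and "U \<noteq> {}"
    and "mu_interior_point M U x"
  shows "\<exists>r :: 'a \<Rightarrow> 'a. (\<forall>y. r y \<in> U) \<and> (\<forall>y\<in>U. r y = y) \<and>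
           (\<lambda>y. dist y (r y)) \<in> o[at x](\<lambda>y. dist y x)"
proof -
  obtain B where B: "B \<in> sets borel" "B \<subseteq> U"
    and density: "((\<lambda>r. emeasure M (ball x r - B) / emeasure M (ball x r)) \<longlongrightarrow> 0) (at_right 0)"
    using assms(3) unfolding mu_interior_point_def by blast
  have "(\<lambda>y. infdist y U) \<in> o[at x](\<lambda>y. dist y x)"
  proof (rule landau_o.smallI)
    fix c :: real
    assume "c > 0"
    with assms(1) B(1) density
    have "\<forall>\<^sub>F y in at x. \<exists>b\<in>B. dist y b < c * dist y x"
      by (rule doubling_mms_density_point_near)
    then show "\<forall>\<^sub>F y in at x. norm (infdist y U) \<le> c * norm (dist y x)"
      by eventually_elim
        (use B(2) in \<open>auto simp: infdist_nonneg intro: infdist_le2 less_imp_le\<close>)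
  qed
  with assms(2) show ?thesis
    by (rule exists_retraction_smallo)
qed

end
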